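(* Let $n\geq 4$ and let $\pi\in S(\mathbb{Z}_n)$ satisfy $t([\pi])=n-2$. Then $\pi$ is a strong complete mapping, i.e. both $x\mapsto \pi(x)-x$ and $x\mapsto \pi(x)+x$ are permutations of $\mathbb{Z}_n$.
   Context: $S(\mathbb{Z}_n)$ is the set of bijections $\mathbb{Z}_n\to\mathbb{Z}_n$. For $\pi\in S(\mathbb{Z}_n)$, $\mathrm{cyc}(\pi)$ is the number of cycles (including fixed points) of $\pi$, $t(\pi)=n-\mathrm{cyc}(\pi)$, $[\pi]=\{x\mapsto \pi(x+b): b\in\mathbb{Z}_n\}$ and $t([\pi])=\min_{\sigma\in[\pi]}t(\sigma)$. *)

theory Defs
  imports "HOL-Combinatorics.Combinatorics"
begin

(* Z_n is modelled by {..<n} :: nat set with arithmetic mod n.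
   A bijection Z_n -> Z_n is a function p with  p permutes {..<n}
   (identity outside {..<n}). *)

(* number of cycles (fixed points included) of p on Z_n = number of distinct orbits *)
definition cyc :: "nat \<Rightarrow> (nat \<Rightarrow> nat) \<Rightarrow> nat" where
  "cyc n p = card ((\<lambda>x. orbit p x) ` {..<n})"

definition tr :: "nat \<Rightarrow> (nat \<Rightarrow> nat) \<Rightarrow> nat" where
  "tr n p = n - cyc n p"

definition shiftp :: "nat \<Rightarrow> (nat \<Rightarrow> nat) \<Rightarrow> nat \<Rightarrow> (nat \<Rightarrow> nat)" where
  "shiftp n p b = (\<lambda>x. if x < n then p ((x + b) mod n) else x)"

(* t([p]) = min over the class [p] = {x \<mapsto> p(x+b) : b \<in> Z_n} *)
definition tr_class :: "nat \<Rightarrow> (nat \<Rightarrow> nat) \<Rightarrow> nat" where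
  "tr_class n p = Min ((\<lambda>b. tr n (shiftp n p b)) ` {..<n})"

end

theory Submission
  imports Defs
begin

text \<open>Write \<open>\<sigma>\<^sub>b x = p (x + b)\<close>. The hypothesis says that every \<open>\<sigma>\<^sub>b\<close> has at most two
cycles, and a permutation of \<open>\<int>\<^sub>n\<close> with two disjoint nonempty invariant sets that do not
cover \<open>\<int>\<^sub>n\<close> has at least three. If \<open>p z - z = p w - w\<close> with \<open>z \<noteq> w\<close>, then for
\<open>b = z - p z\<close> both \<open>p z\<close> and \<open>p w\<close> are fixed points of \<open>\<sigma>\<^sub>b\<close>, and \<open>n \<ge> 3\<close> leaves room for a
third cycle. If \<open>p z + z = p w + w\<close>, then for \<open>b = z - p w\<close> the map \<open>\<sigma>\<^sub>b\<close> swaps \<open>p z\<close> and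
\<open>p w\<close>; since \<open>x \<mapsto> p x - x\<close> is already known to be onto, some \<open>v\<close> has \<open>p v - v = -b\<close>, so \<open>p v\<close>
is a fixed point of \<open>\<sigma>\<^sub>b\<close>, and \<open>n \<ge> 4\<close> again forces a third cycle.\<close>

lemma mod_eq_iff_int_dvd: "a mod n = b mod n \<longleftrightarrow> int n dvd int a - int b"
  by (metis mod_eq_dvd_iff of_nat_eq_iff zmod_int)

lemma int_mod_add_diff:
  assumes "y \<le> n"
  shows "int ((x + n - y) mod n) = (int x - int y) mod int n"
proof -
  have "int (x + n - y) = (int x - int y) + int n"
    using assms by simp
  then show ?thesis
    by (simp only: zmod_int mod_add_self2)
qed

lemma ex_residue_dvd_diff:
  assumes "0 < n" obtains b where "b < n" "int n dvd int b - c"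
proof
  show "nat (c mod int n) < n" using assms by (simp add: nat_less_iff)
  show "int n dvd int (nat (c mod int n)) - c"
    using assms by (simp add: mod_eq_dvd_iff[symmetric])
qed

lemma bij_betw_lessThan_if_inj_on:
  fixes f :: "nat \<Rightarrow> nat"
  assumes "inj_on f {..<n}" "\<And>x. x < n \<Longrightarrow> f x < n"
  shows "bij_betw f {..<n} {..<n}"
proof -
  have "f ` {..<n} \<subseteq> {..<n}" using assms(2) by auto
  then have "f ` {..<n} = {..<n}" using assms(1) by (intro endo_inj_surj) auto
  then show ?thesis using assms(1) by (simp add: bij_betw_def)
qed

lemma orbit_subset_if_image_subset:
  assumes "f ` A \<subseteq> A" "x \<in> A" shows "orbit f x \<subseteq> A"
proof
  fix y assume "y \<in> orbit f x"
  then show "y \<in> A" by induct (use assms in auto)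
qed

lemma cyc_le: "cyc n q \<le> n"
  unfolding cyc_def by (metis card_image_le card_lessThan finite_lessThan)

lemma three_le_cyc:
  assumes q: "q permutes {..<n}" and inv: "q ` A = A" "q ` B = B"
    and "A \<inter> B = {}" "A \<noteq> {}" "B \<noteq> {}" "A \<union> B \<subseteq> {..<n}" "card (A \<union> B) < n"
  shows "3 \<le> cyc n q"
proof -
  define C where "C = {..<n} - (A \<union> B)"
  have "\<not> {..<n} \<subseteq> A \<union> B"
  proof
    assume "{..<n} \<subseteq> A \<union> B"
    then have "card {..<n} \<le> card (A \<union> B)"
      using \<open>A \<union> B \<subseteq> {..<n}\<close> by (intro card_mono) (auto intro: finite_subset)
    with \<open>card (A \<union> B) < n\<close> show False by simp
  qed
  then obtain u where "u \<in> C" unfolding C_def by auto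
  have "q ` C \<subseteq> C"
  proof
    fix y assume "y \<in> q ` C"
    then obtain x where "x \<in> C" "y = q x" by auto
    then have "y < n" using permutes_in_image[OF q] unfolding C_def by auto
    moreover have "y \<notin> q ` A" "y \<notin> q ` B"
      using \<open>x \<in> C\<close> \<open>y = q x\<close> inj_image_mem_iff[OF permutes_inj[OF q]] unfolding C_def by auto
    ultimately show "y \<in> C" using inv unfolding C_def by auto
  qed
  obtain a c where "a \<in> A" "c \<in> B"
    using assms by blast
  have "orbit q a \<subseteq> A" "orbit q c \<subseteq> B" "orbit q u \<subseteq> C"
    by (rule orbit_subset_if_image_subset;
        use inv \<open>q ` C \<subseteq> C\<close> \<open>a \<in> A\<close> \<open>c \<in> B\<close> \<open>u \<in> C\<close> in simp)+
  moreover have "q a \<in> orbit q a" "q c \<in> orbit q c" "q u \<in> orbit q u"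
    by (auto intro: orbit.base)
  ultimately have "orbit q a \<noteq> orbit q c" "orbit q a \<noteq> orbit q u" "orbit q c \<noteq> orbit q u"
    using \<open>A \<inter> B = {}\<close> unfolding C_def by blast+
  then have "card {orbit q a, orbit q c, orbit q u} = 3"
    by simp
  moreover have "{orbit q a, orbit q c, orbit q u} \<subseteq> (\<lambda>x. orbit q x) ` {..<n}"
    using \<open>a \<in> A\<close> \<open>c \<in> B\<close> \<open>u \<in> C\<close> assms unfolding C_def by auto
  ultimately show ?thesis
    unfolding cyc_def by (metis card_mono finite_imageI finite_lessThan)
qed

lemma shiftp_permutes:
  assumes p: "p permutes {..<n}" shows "shiftp n p b permutes {..<n}"
proof (rule bij_imp_permutes)
  have "inj_on (\<lambda>x. (x + b) mod n) {..<n}"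
  proof (rule inj_onI)
    fix x y assume "x \<in> {..<n}" "y \<in> {..<n}" "(x + b) mod n = (y + b) mod n"
    then have "x mod n = y mod n" unfolding mod_eq_iff_int_dvd by simp
    with \<open>x \<in> {..<n}\<close> \<open>y \<in> {..<n}\<close> show "x = y" by simp
  qed
  then have "bij_betw (\<lambda>x. (x + b) mod n) {..<n} {..<n}"
    by (rule bij_betw_lessThan_if_inj_on) simp
  then have "bij_betw (p \<circ> (\<lambda>x. (x + b) mod n)) {..<n} {..<n}"
    using bij_betw_trans permutes_imp_bij[OF p] by blast
  then show "bij_betw (shiftp n p b) {..<n} {..<n}"
    by (rule bij_betw_cong[THEN iffD1, rotated]) (simp add: shiftp_def)
qed (simp add: shiftp_def)

lemma shiftp_eq_iff_dvd:
  assumes p: "p permutes {..<n}" and "x < n" "y < n"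
  shows "shiftp n p b x = p y \<longleftrightarrow> int n dvd int x + int b - int y"
proof -
  have "shiftp n p b x = p y \<longleftrightarrow> (x + b) mod n = y mod n"
    using assms permutes_inj[OF p] by (simp add: shiftp_def inj_eq)
  also have "\<dots> \<longleftrightarrow> int n dvd int x + int b - int y"
    by (simp add: mod_eq_iff_int_dvd)
  finally show ?thesis .
qed

lemma cyc_shiftp_le_if_tr_class_ge:
  assumes "n - k \<le> tr_class n p" "b < n"
  shows "cyc n (shiftp n p b) \<le> k"
proof -
  have "tr_class n p \<le> tr n (shiftp n p b)"
    unfolding tr_class_def using assms(2) by (intro Min_le) auto
  then show ?thesis
    using assms(1) cyc_le[of n "shiftp n p b"] unfolding tr_def by linarith
qed

lemma inj_on_diff_map:
  assumes "3 \<le> n" and p: "p permutes {..<n}"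
    and few: "\<And>b. b < n \<Longrightarrow> cyc n (shiftp n p b) \<le> 2"
  shows "inj_on (\<lambda>x. (p x + n - x) mod n) {..<n}"
proof (rule inj_onI, rule ccontr)
  fix z w assume "z \<in> {..<n}" "w \<in> {..<n}" "z \<noteq> w"
    and eq: "(p z + n - z) mod n = (p w + n - w) mod n"
  then have zw: "z < n" "w < n" "p z < n" "p w < n" "p z \<noteq> p w"
    using permutes_in_image[OF p] permutes_inj[OF p] by (auto simp: inj_eq)
  with eq have "(int (p z) - int z) mod int n = (int (p w) - int w) mod int n"
    using int_mod_add_diff[of z n "p z"] int_mod_add_diff[of w n "p w"] by simp
  then have d: "int n dvd (int (p z) - int z) - (int (p w) - int w)"
    by (simp add: mod_eq_dvd_iff)
  obtain b where "b < n" and b: "int n dvd int b - (int z - int (p z))"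
    using ex_residue_dvd_diff \<open>3 \<le> n\<close> by (metis zero_less_numeral less_le_trans)
  have "int n dvd int (p z) + int b - int z"
    using b by (simp add: algebra_simps)
  moreover have "int n dvd int (p w) + int b - int w"
    using dvd_diff[OF b d] by (simp add: algebra_simps)
  ultimately have "shiftp n p b (p z) = p z" "shiftp n p b (p w) = p w"
    using zw shiftp_eq_iff_dvd[OF p] by simp_all
  then have "3 \<le> cyc n (shiftp n p b)"
    using zw \<open>3 \<le> n\<close>
    by (intro three_le_cyc[OF shiftp_permutes[OF p], where A = "{p z}" and B = "{p w}"]) auto
  with few[OF \<open>b < n\<close>] show False by simp
qed

lemma shiftp_fixes_some_image:
  assumes p: "p permutes {..<n}" and diff: "bij_betw (\<lambda>x. (p x + n - x) mod n) {..<n} {..<n}"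
    and "b < n"
  obtains v where "v < n" "shiftp n p b (p v) = p v"
proof -
  have "(n - b) mod n \<in> (\<lambda>x. (p x + n - x) mod n) ` {..<n}"
    using bij_betw_imp_surj_on[OF diff] \<open>b < n\<close> by simp
  then obtain v where "v < n" and v: "(p v + n - v) mod n = (n - b) mod n"
    by auto
  have "p v < n" using \<open>v < n\<close> permutes_in_image[OF p] by simp
  have "int ((n - b) mod n) = (- int b) mod int n"
    using int_mod_add_diff[of b n 0] \<open>b < n\<close> by simp
  with v \<open>v < n\<close> \<open>p v < n\<close> have "(int (p v) - int v) mod int n = (- int b) mod int n"
    using int_mod_add_diff[of v n "p v"] by simp
  then have "int n dvd (int (p v) - int v) - (- int b)"
    by (simp only: mod_eq_dvd_iff)
  then have "int n dvd int (p v) + int b - int v"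
    by (simp add: algebra_simps)
  then show ?thesis
    using that \<open>p v < n\<close> \<open>v < n\<close> shiftp_eq_iff_dvd[OF p] by simp
qed

lemma inj_on_sum_map:
  assumes "4 \<le> n" and p: "p permutes {..<n}"
    and few: "\<And>b. b < n \<Longrightarrow> cyc n (shiftp n p b) \<le> 2"
    and diff: "bij_betw (\<lambda>x. (p x + n - x) mod n) {..<n} {..<n}"
  shows "inj_on (\<lambda>x. (p x + x) mod n) {..<n}"
proof (rule inj_onI, rule ccontr)
  fix z w assume "z \<in> {..<n}" "w \<in> {..<n}" "z \<noteq> w"
    and eq: "(p z + z) mod n = (p w + w) mod n"
  then have zw: "z < n" "w < n" "p z < n" "p w < n" "p z \<noteq> p w"
    using permutes_in_image[OF p] permutes_inj[OF p] by (auto simp: inj_eq)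
  from eq have s: "int n dvd (int (p z) + int z) - (int (p w) + int w)"
    by (simp add: mod_eq_iff_int_dvd)
  obtain b where "b < n" and b: "int n dvd int b - (int z - int (p w))"
    using ex_residue_dvd_diff \<open>4 \<le> n\<close> by (metis zero_less_numeral less_le_trans)
  have "int n dvd int (p w) + int b - int z"
    using b by (simp add: algebra_simps)
  moreover have "int n dvd int (p z) + int b - int w"
    using dvd_add[OF b s] by (simp add: algebra_simps)
  ultimately have swap: "shiftp n p b (p w) = p z" "shiftp n p b (p z) = p w"
    using zw shiftp_eq_iff_dvd[OF p] by simp_all
  obtain v where "v < n" and fixed: "shiftp n p b (p v) = p v"
    using shiftp_fixes_some_image[OF p diff \<open>b < n\<close>] .
  have "p v < n" using \<open>v < n\<close> permutes_in_image[OF p] by simp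
  have "3 \<le> cyc n (shiftp n p b)"
  proof (rule three_le_cyc[OF shiftp_permutes[OF p], where A = "{p v}" and B = "{p z, p w}"])
    show "shiftp n p b ` {p v} = {p v}" "shiftp n p b ` {p z, p w} = {p z, p w}"
      using fixed swap by auto
    show "{p v} \<inter> {p z, p w} = {}"
      using fixed swap zw(5) by auto
    show "{p v} \<union> {p z, p w} \<subseteq> {..<n}"
      using zw \<open>p v < n\<close> by auto
    have "card ({p v} \<union> {p z, p w}) \<le> 3"
      by (simp add: card_insert_if)
    then show "card ({p v} \<union> {p z, p w}) < n"
      using \<open>4 \<le> n\<close> by simp
  qed simp_all
  with few[OF \<open>b < n\<close>] show False by simp
qed

theorem proposition2p6:
  fixes n :: nat and p :: "nat \<Rightarrow> nat"
  assumes "n \<ge> 4"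
    and "p permutes {..<n}"
    and "tr_class n p = n - 2"
  shows "bij_betw (\<lambda>x. (p x + n - x) mod n) {..<n} {..<n}
       \<and> bij_betw (\<lambda>x. (p x + x) mod n) {..<n} {..<n}"
proof -
  have few: "\<And>b. b < n \<Longrightarrow> cyc n (shiftp n p b) \<le> 2"
    using cyc_shiftp_le_if_tr_class_ge assms(3) by simp
  have "n > 0" using assms(1) by simp
  have diff: "bij_betw (\<lambda>x. (p x + n - x) mod n) {..<n} {..<n}"
    using inj_on_diff_map[OF _ assms(2) few] assms(1) \<open>n > 0\<close>
    by (intro bij_betw_lessThan_if_inj_on) simp_all
  moreover have "bij_betw (\<lambda>x. (p x + x) mod n) {..<n} {..<n}"
    using inj_on_sum_map[OF assms(1,2) few diff] \<open>n > 0\<close>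
    by (intro bij_betw_lessThan_if_inj_on) simp_all
  ultimately show ?thesis ..
qed

end
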